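(* Let $U(x)=\big(|x|_1-\tfrac{d\lambda'}{\delta'}\big)^2$ and $U^p:=(U)^p$. Then for every $p\in\mathbb{N}$ and every $x\in\mathbb{R}_+^d$ at which $\gamma(x)$ is defined, $\nabla U^p(x)\cdot\gamma(x)\le 0$.
   Context: Fix an integer $d\ge 2$ and constants $\kappa',\lambda',\delta'>0$. Indices are cyclic modulo $d$: $x_0:=x_d$, $x_{d+1}:=x_1$. $\mathbb{R}_+^d=[0,\infty)^d$, $|x|_1=\sum_i|x_i|$, $|\cdot|$ the Euclidean norm, $e_k$ the standard basis. $b(x)=\sum_{k=1}^d e_k\big(\kappa'(x_{k-1}-x_{k+1})x_k+\lambda'-\delta'x_k\big)$ and $\gamma(x)=b(x)/|b(x)|$ (defined wherever $b(x)\ne0$, in particular on all of $\partial\mathbb{R}_+^d$). *)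

theory Defs
  imports "HOL-Analysis.Analysis"
begin

text \<open>Coordinates of \<open>real^'n\<close> are labelled \<open>x_1,...,x_d\<close> (d = CARD('n)) through a
  bijection \<open>e\<close> from \<open>{..<d}\<close> onto the index type: label k (0-based) is the
  coordinate \<open>x $ e k\<close>. Indices are cyclic modulo d.\<close>

definition drift :: "(nat \<Rightarrow> 'n::finite) \<Rightarrow> real \<Rightarrow> real \<Rightarrow> real \<Rightarrow> real^'n \<Rightarrow> real^'n" where
  "drift e kap lam del x =
     (let d = CARD('n) in
      \<Sum>k<d. (kap * (x $ e ((k + d - 1) mod d) - x $ e ((k + 1) mod d)) * x $ e k
                  + lam - del * x $ e k) *\<^sub>R (axis (e k) 1 :: real^'n))"

definition refl_dir :: "(nat \<Rightarrow> 'n::finite) \<Rightarrow> real \<Rightarrow> real \<Rightarrow> real \<Rightarrow> real^'n \<Rightarrow> real^'n" where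
  "refl_dir e kap lam del x = (1 / norm (drift e kap lam del x)) *\<^sub>R drift e kap lam del x"

definition norm1 :: "real^'n \<Rightarrow> real" where
  "norm1 x = (\<Sum>i\<in>UNIV. \<bar>x $ i\<bar>)"

definition Ufun :: "real \<Rightarrow> real \<Rightarrow> real^'n \<Rightarrow> real" where
  "Ufun lam del x = (norm1 x - real CARD('n) * lam / del)\<^sup>2"

definition orthant :: "(real^'n) set" where
  "orthant = {x. \<forall>i. 0 \<le> x $ i}"

end

theory Submission
  imports Defs
begin

text \<open>On the orthant the 1-norm is the linear form \<open>1 \<bullet> x\<close> (with \<open>1\<close> the all-ones
  vector), so \<open>U^p = (1 \<bullet> x - c)^(2p)\<close> with \<open>c = d\<lambda>/\<delta>\<close> and its gradient is
  \<open>2p (1 \<bullet> x - c)^(2p-1) \<cdot> 1\<close>; it is unique because the orthant contains a segment from \<open>x\<close>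
  in every coordinate direction. Summing the components of the drift, the quadratic terms
  \<open>\<kappa> (x_(k-1) - x_(k+1)) x_k\<close> cancel cyclically, leaving \<open>1 \<bullet> b(x) = -\<delta> (1 \<bullet> x - c)\<close>.
  Hence the gradient paired with \<open>b(x)\<close> is \<open>-2p\<delta> (1 \<bullet> x - c)^(2p) \<le> 0\<close>, and \<open>\<gamma>(x)\<close> is
  a positive multiple of \<open>b(x)\<close>.\<close>

lemma sum_lessThan_rotate:
  fixes f :: "nat \<Rightarrow> 'a::comm_monoid_add"
  assumes "0 < n"
  shows "(\<Sum>k<n. f ((k + 1) mod n)) = (\<Sum>k<n. f k)"
proof -
  have "bij_betw (\<lambda>k. (k + 1) mod n) {..<n} {..<n}"
  proof (rule bij_betw_imageI)
    show "inj_on (\<lambda>k. (k + 1) mod n) {..<n}"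
      by (rule inj_onI) (auto simp: mod_Suc split: if_splits)
    then show "(\<lambda>k. (k + 1) mod n) ` {..<n} = {..<n}"
      using assms by (intro endo_inj_surj) auto
  qed
  then show ?thesis
    by (rule sum.reindex_bij_betw)
qed

lemma sum_cyclic_neighbour_differences:
  fixes a :: "nat \<Rightarrow> 'a::comm_ring"
  assumes "0 < n"
  shows "(\<Sum>k<n. (a ((k + n - 1) mod n) - a ((k + 1) mod n)) * a k) = 0"
proof -
  have "(\<Sum>k<n. a ((k + 1) mod n) * a (((k + 1) mod n + n - 1) mod n))
      = (\<Sum>k<n. a k * a ((k + n - 1) mod n))"
    using sum_lessThan_rotate[OF assms, of "\<lambda>k. a k * a ((k + n - 1) mod n)"] .
  moreover have "((k + 1) mod n + n - 1) mod n = k" if "k < n" for k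
    using that by (auto simp: mod_Suc)
  ultimately have "(\<Sum>k<n. a ((k + 1) mod n) * a k) = (\<Sum>k<n. a ((k + n - 1) mod n) * a k)"
    by (simp add: mult.commute)
  then show ?thesis
    by (simp add: left_diff_distrib sum_subtractf)
qed

lemma inner_one_vec: "(1 :: real^'n) \<bullet> x = (\<Sum>i\<in>UNIV. x $ i)"
  by (simp add: inner_vec_def one_vec_def)

lemma norm1_eq_inner_one: "x \<in> orthant \<Longrightarrow> norm1 x = 1 \<bullet> x"
  by (simp add: norm1_def inner_one_vec orthant_def)

lemma inner_one_drift:
  fixes e :: "nat \<Rightarrow> 'n::finite"
  assumes "bij_betw e {..<CARD('n)} UNIV"
  shows "1 \<bullet> drift e kap lam del x = real CARD('n) * lam - del * (1 \<bullet> x)"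
proof -
  define d where "d = CARD('n)"
  define a where "a k = x $ e k" for k
  have "1 \<bullet> drift e kap lam del x
      = (\<Sum>k<d. kap * (a ((k + d - 1) mod d) - a ((k + 1) mod d)) * a k + lam - del * a k)"
    by (simp add: drift_def Let_def d_def a_def inner_sum_right inner_axis one_vec_def)
  also have "\<dots> = kap * (\<Sum>k<d. (a ((k + d - 1) mod d) - a ((k + 1) mod d)) * a k)
      + real d * lam - del * (\<Sum>k<d. a k)"
    by (simp add: sum.distrib sum_subtractf sum_distrib_left mult.assoc)
  also have "\<dots> = real d * lam - del * (\<Sum>k<d. a k)"
    using sum_cyclic_neighbour_differences[of d a] by (simp add: d_def)
  also have "(\<Sum>k<d. a k) = 1 \<bullet> x"
    unfolding a_def d_def inner_one_vec by (rule sum.reindex_bij_betw[OF assms])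
  finally show ?thesis
    by (simp add: d_def)
qed

lemma has_derivative_Ufun_power:
  fixes lam del :: real and x :: "real^'n"
  defines "c \<equiv> real CARD('n) * lam / del"
  assumes "x \<in> orthant"
  shows "((\<lambda>y. Ufun lam del y ^ p) has_derivative
           (\<lambda>h. (real (2 * p) * (1 \<bullet> x - c) ^ (2 * p - 1)) *\<^sub>R 1 \<bullet> h)) (at x within orthant)"
proof -
  have polynomial: "((\<lambda>y. (1 \<bullet> y - c) ^ (2 * p)) has_derivative
           (\<lambda>h. (real (2 * p) * (1 \<bullet> x - c) ^ (2 * p - 1)) *\<^sub>R 1 \<bullet> h)) (at x within orthant)"
    by (auto intro!: derivative_eq_intros)
  have "(1 \<bullet> y - c) ^ (2 * p) = Ufun lam del y ^ p" if "y \<in> orthant" for y :: "real^'n"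
    using that by (simp add: Ufun_def c_def norm1_eq_inner_one power_mult)
  then show ?thesis
    by (rule has_derivative_transform_within[OF polynomial zero_less_one assms(2)])
qed

lemma has_derivative_unique_within_orthant:
  fixes f :: "real^'n \<Rightarrow> 'b::real_normed_vector"
  assumes "x \<in> orthant"
    and "(f has_derivative f') (at x within orthant)"
    and "(f has_derivative f'') (at x within orthant)"
  shows "f' = f''"
proof (rule frechet_derivative_unique_within[OF assms(2,3)])
  fix i :: "real^'n" and r :: real
  assume "i \<in> Basis" and "r > 0"
  then show "\<exists>d. 0 < \<bar>d\<bar> \<and> \<bar>d\<bar> < r \<and> x + d *\<^sub>R i \<in> orthant"
    using assms(1) by (intro exI[of _ "r / 2"]) (auto simp: Basis_vec_def orthant_def axis_def)
qed

lemma inner_Ufun_gradient_drift: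
  fixes e :: "nat \<Rightarrow> 'n::finite" and lam del :: real
  defines "c \<equiv> real CARD('n) * lam / del"
  assumes "bij_betw e {..<CARD('n)} UNIV" and "del \<noteq> 0"
  shows "((real (2 * p) * (1 \<bullet> x - c) ^ (2 * p - 1)) *\<^sub>R 1) \<bullet> drift e kap lam del x
       = - del * real (2 * p) * (1 \<bullet> x - c) ^ (2 * p)"
proof -
  have "1 \<bullet> drift e kap lam del x = - del * (1 \<bullet> x - c)"
    using inner_one_drift[OF assms(2)] assms(3) by (simp add: c_def algebra_simps)
  then have "((real (2 * p) * (1 \<bullet> x - c) ^ (2 * p - 1)) *\<^sub>R 1) \<bullet> drift e kap lam del x
      = - del * (real (2 * p) * (1 \<bullet> x - c) ^ (2 * p - 1) * (1 \<bullet> x - c))"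
    by simp
  moreover have "real n * t ^ (n - 1) * t = real n * t ^ n" for n and t :: real
    by (cases n) auto
  ultimately show ?thesis
    by (simp only: mult.assoc)
qed

theorem lemma4p1:
  fixes e :: "nat \<Rightarrow> 'n::finite" and kap lam del :: real and p :: nat and x :: "real^'n"
  assumes "CARD('n) \<ge> 2"
    and "bij_betw e {..<CARD('n)} UNIV"
    and "kap > 0" and "lam > 0" and "del > 0"
    and "x \<in> orthant"
    and "drift e kap lam del x \<noteq> 0"
  shows "(\<exists>G. ((\<lambda>y. Ufun lam del y ^ p) has_derivative (\<lambda>h. G \<bullet> h)) (at x within orthant))
       \<and> (\<forall>G. ((\<lambda>y. Ufun lam del y ^ p) has_derivative (\<lambda>h. G \<bullet> h)) (at x within orthant)
              \<longrightarrow> G \<bullet> refl_dir e kap lam del x \<le> 0)"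
proof -
  define c where "c = real CARD('n) * lam / del"
  define grad :: "real^'n" where "grad = (real (2 * p) * (1 \<bullet> x - c) ^ (2 * p - 1)) *\<^sub>R 1"
  have grad: "((\<lambda>y. Ufun lam del y ^ p) has_derivative (\<lambda>h. grad \<bullet> h)) (at x within orthant)"
    unfolding grad_def c_def using assms(6) by (rule has_derivative_Ufun_power)
  have "grad \<bullet> drift e kap lam del x = - del * real (2 * p) * (1 \<bullet> x - c) ^ (2 * p)"
    unfolding grad_def c_def using assms(2,5) by (intro inner_Ufun_gradient_drift) auto
  then have grad_drift: "grad \<bullet> drift e kap lam del x \<le> 0"
    using assms(5) by (simp add: zero_le_mult_iff)
  show ?thesis
  proof (intro conjI exI allI impI)
    show "((\<lambda>y. Ufun lam del y ^ p) has_derivative (\<lambda>h. grad \<bullet> h)) (at x within orthant)"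
      by (rule grad)
    fix G
    assume "((\<lambda>y. Ufun lam del y ^ p) has_derivative (\<lambda>h. G \<bullet> h)) (at x within orthant)"
    then have "(\<lambda>h. G \<bullet> h) = (\<lambda>h. grad \<bullet> h)"
      using assms(6) grad by (intro has_derivative_unique_within_orthant)
    then have "G \<bullet> drift e kap lam del x \<le> 0"
      using grad_drift by metis
    then show "G \<bullet> refl_dir e kap lam del x \<le> 0"
      by (simp add: refl_dir_def divide_nonpos_nonneg)
  qed
qed

end
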